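(* Let $C, C'$ be programs of the probabilistic guarded command language $\mathsf{pGCL}$ and let $f \in \mathbb{E}$ be an expectation. If $C'$ implements $C$ (i.e. $C' \multimap C$), then $$\mathrm{dwp}[\![C]\!](f) \le \mathrm{dwp}[\![C']\!](f) \qquad\text{and}\qquad \mathrm{awp}[\![C]\!](f) \ge \mathrm{awp}[\![C']\!](f),$$ where $\le,\ge$ are the pointwise orders on expectations.
   Context: States: fix a countably infinite set of program variables with values in $\mathbb{Q}_{\ge 0}$; a state is a map $\sigma$ from variables to $\mathbb{Q}_{\ge0}$ which is $0$ for all but finitely many variables; $\mathsf{States}$ is the set of states. A predicate is a map $\varphi:\mathsf{States}\to\{\mathsf{true},\mathsf{false}\}$; $\varphi\models\psi$ (entailment) means every state satisfying $\varphi$ satisfies $\psi$, and $\models\varphi$ means $\varphi$ holds in every state. Expectations: $\mathbb{E}$ is the set of maps $\mathsf{States}\to[0,\infty]$, ordered pointwise ($f\le g$ iff $f(\sigma)\le g(\sigma)$ for all $\sigma$), a complete lattice; $+,\cdot$ are pointwise with $0\cdot\infty=\infty\cdot 0=0$; $f\sqcap g$ and $f\sqcup g$ are pointwise minimum and maximum; $[\varphi]$ is the Iverson bracket ($1$ where $\varphi$ holds, $0$ elsewhere); $(\varphi\to g)(\sigma)=g(\sigma)$ if $\sigma\models\varphi$ and $\infty$ otherwise; $f[x/E](\sigma)=f(\sigma[x\mapsto E(\sigma)])$. Programs $C$ of $\mathsf{pGCL}$: $C ::= \mathtt{skip} \mid x:=E \mid C;C \mid \mathtt{if}\ \varphi_1\to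 C\ \square\ \varphi_2\to C \mid \{C\}[p]\{C\} \mid \mathtt{while}(\varphi)\{C\}$, where $E:\mathsf{States}\to\mathbb{Q}_{\ge0}$, $p:\mathsf{States}\to[0,1]$, predicates $\varphi,\varphi_i$, and in every guarded choice $\varphi_1\vee\varphi_2$ must be valid (if both guards hold the choice is nondeterministic). Each loop carries an invariant annotation $I\in\mathbb{E}$. Weakest preexpectations, defined by induction on $C$ (for $\mathcal{T}\in\{\mathrm{dwp},\mathrm{awp}\}$): $\mathcal{T}[\![\mathtt{skip}]\!](f)=f$; $\mathcal{T}[\![x:=E]\!](f)=f[x/E]$; $\mathcal{T}[\![C_1;C_2]\!](f)=\mathcal{T}[\![C_1]\!](\mathcal{T}[\![C_2]\!](f))$; $\mathrm{dwp}[\![\mathtt{if}\ \varphi_1\to C_1\ \square\ \varphi_2\to C_2]\!](f)=(\varphi_1\to\mathrm{dwp}[\![C_1]\!](f))\sqcap(\varphi_2\to\mathrm{dwp}[\![C_2]\!](f))$; $\mathrm{awp}[\![\mathtt{if}\ \varphi_1\to C_1\ \square\ \varphi_2\to C_2]\!](f)=[\varphi_1]\cdot\mathrm{awp}[\![C_1]\!](f)\sqcup[\varphi_2]\cdot\mathrm{awp}[\![C_2]\!](f)$; $\mathcal{T}[\![\{C_1\}[p]\{C_2\}]\!](f)=p\cdot\mathcal{T}[\![C_1]\!](f)+(1-p)\cdot\mathcal{T}[\![C_2]\!](f)$; $\mathcal{T}[\![\mathtt{while}(\varphi)\{C'\}]\!](f)$ is the least fixpoint (in $(\mathbb{E},\le)$)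 of $g\mapsto[\neg\varphi]\cdot f+[\varphi]\cdot\mathcal{T}[\![C']\!](g)$. Implementation relation: $\multimap$ is the smallest partial order on $\mathsf{pGCL}$ closed under: if $C_1'\multimap C_1$ and $C_2'\multimap C_2$ then $C_1';C_2'\multimap C_1;C_2$ and $\{C_1'\}[p]\{C_2'\}\multimap\{C_1\}[p]\{C_2\}$; if moreover $\varphi_1'\models\varphi_1$, $\varphi_2'\models\varphi_2$ and $\models\varphi_1'\vee\varphi_2'$, then $\mathtt{if}\ \varphi_1'\to C_1'\ \square\ \varphi_2'\to C_2'\multimap\mathtt{if}\ \varphi_1\to C_1\ \square\ \varphi_2\to C_2$; if $C'\multimap C$ then $\mathtt{while}(\varphi)\{C'\}\multimap\mathtt{while}(\varphi)\{C\}$. *)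

theory Defs
  imports "HOL-Library.Extended_Nonnegative_Real"
begin

typedef qnn = "{q :: rat. 0 \<le> q}"
  by (rule exI[of _ 0]) simp

typedef state = "{\<sigma> :: nat \<Rightarrow> qnn. finite {x. Rep_qnn (\<sigma> x) \<noteq> 0}}"
  by (rule exI[of _ "\<lambda>_. Abs_qnn 0"]) (simp add: Abs_qnn_inverse)

typedef prob = "{r :: real. 0 \<le> r \<and> r \<le> 1}"
  by (rule exI[of _ 0]) simp

type_synonym pred = "state \<Rightarrow> bool"
type_synonym expectation = "state \<Rightarrow> ennreal"

definition upd :: "state \<Rightarrow> nat \<Rightarrow> qnn \<Rightarrow> state" where
  "upd \<sigma> x v = Abs_state ((Rep_state \<sigma>)(x := v))"

definition iver :: "pred \<Rightarrow> expectation" where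
  "iver \<phi> = (\<lambda>\<sigma>. if \<phi> \<sigma> then 1 else 0)"

definition guard_to :: "pred \<Rightarrow> expectation \<Rightarrow> expectation" where
  "guard_to \<phi> g = (\<lambda>\<sigma>. if \<phi> \<sigma> then g \<sigma> else \<infinity>)"

definition subst :: "expectation \<Rightarrow> nat \<Rightarrow> (state \<Rightarrow> qnn) \<Rightarrow> expectation" where
  "subst f x E = (\<lambda>\<sigma>. f (upd \<sigma> x (E \<sigma>)))"

datatype pgcl =
    Skip
  | Assign nat "state \<Rightarrow> qnn"
  | Seq pgcl pgcl
  | GChoice pred pgcl pred pgcl
  | PChoice pgcl "state \<Rightarrow> prob" pgcl
  | While pred expectation pgcl     (* while(phi){C} with invariant annotation *)

fun wf :: "pgcl \<Rightarrow> bool" where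
  "wf Skip = True"
| "wf (Assign x E) = True"
| "wf (Seq C1 C2) = (wf C1 \<and> wf C2)"
| "wf (GChoice \<phi>1 C1 \<phi>2 C2) = ((\<forall>\<sigma>. \<phi>1 \<sigma> \<or> \<phi>2 \<sigma>) \<and> wf C1 \<and> wf C2)"
| "wf (PChoice C1 p C2) = (wf C1 \<and> wf C2)"
| "wf (While \<phi> I C) = wf C"

primrec dwp :: "pgcl \<Rightarrow> expectation \<Rightarrow> expectation" where
  "dwp Skip f = f"
| "dwp (Assign x E) f = subst f x E"
| "dwp (Seq C1 C2) f = dwp C1 (dwp C2 f)"
| "dwp (GChoice \<phi>1 C1 \<phi>2 C2) f =
     inf (guard_to \<phi>1 (dwp C1 f)) (guard_to \<phi>2 (dwp C2 f))"
| "dwp (PChoice C1 p C2) f =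
     (\<lambda>\<sigma>. ennreal (Rep_prob (p \<sigma>)) * dwp C1 f \<sigma> + ennreal (1 - Rep_prob (p \<sigma>)) * dwp C2 f \<sigma>)"
| "dwp (While \<phi> I C) f =
     lfp (\<lambda>g \<sigma>. iver (\<lambda>s. \<not> \<phi> s) \<sigma> * f \<sigma> + iver \<phi> \<sigma> * dwp C g \<sigma>)"

primrec awp :: "pgcl \<Rightarrow> expectation \<Rightarrow> expectation" where
  "awp Skip f = f"
| "awp (Assign x E) f = subst f x E"
| "awp (Seq C1 C2) f = awp C1 (awp C2 f)"
| "awp (GChoice \<phi>1 C1 \<phi>2 C2) f =
     sup (\<lambda>\<sigma>. iver \<phi>1 \<sigma> * awp C1 f \<sigma>) (\<lambda>\<sigma>. iver \<phi>2 \<sigma> * awp C2 f \<sigma>)"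
| "awp (PChoice C1 p C2) f =
     (\<lambda>\<sigma>. ennreal (Rep_prob (p \<sigma>)) * awp C1 f \<sigma> + ennreal (1 - Rep_prob (p \<sigma>)) * awp C2 f \<sigma>)"
| "awp (While \<phi> I C) f =
     lfp (\<lambda>g \<sigma>. iver (\<lambda>s. \<not> \<phi> s) \<sigma> * f \<sigma> + iver \<phi> \<sigma> * awp C g \<sigma>)"

text \<open>impl C' C means C' implements C (C' \<multimap> C): the smallest reflexive, transitive
  relation closed under the congruence rules.\<close>
inductive impl :: "pgcl \<Rightarrow> pgcl \<Rightarrow> bool" where
  impl_refl: "impl C C"
| impl_trans: "impl C1 C2 \<Longrightarrow> impl C2 C3 \<Longrightarrow> impl C1 C3"
| impl_seq: "impl C1' C1 \<Longrightarrow> impl C2' C2 \<Longrightarrow> impl (Seq C1' C2') (Seq C1 C2)"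
| impl_prob: "impl C1' C1 \<Longrightarrow> impl C2' C2 \<Longrightarrow> impl (PChoice C1' p C2') (PChoice C1 p C2)"
| impl_if: "impl C1' C1 \<Longrightarrow> impl C2' C2 \<Longrightarrow>
     (\<forall>\<sigma>. \<phi>1' \<sigma> \<longrightarrow> \<phi>1 \<sigma>) \<Longrightarrow> (\<forall>\<sigma>. \<phi>2' \<sigma> \<longrightarrow> \<phi>2 \<sigma>) \<Longrightarrow> (\<forall>\<sigma>. \<phi>1' \<sigma> \<or> \<phi>2' \<sigma>) \<Longrightarrow>
     impl (GChoice \<phi>1' C1' \<phi>2' C2') (GChoice \<phi>1 C1 \<phi>2 C2)"
| impl_while: "impl C' C \<Longrightarrow> impl (While \<phi> I' C') (While \<phi> I C)"

end

theory Submission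
  imports Defs
begin

text \<open>Both transformers are monotone in the postexpectation, and every pGCL constructor is
  monotone in the transformers of its subprograms, so the claim follows by induction on the
  derivation of \<open>impl C' C\<close>. Strengthening the guards of a choice can only remove
  branches: for \<open>dwp\<close> a removed branch contributes \<open>\<infinity>\<close> to an infimum, for \<open>awp\<close> it contributes
  \<open>0\<close> to a supremum. Loops are handled by monotonicity of \<open>lfp\<close>, which needs no monotonicity of
  the loop functional itself.\<close>

lemma guard_to_mono:
  assumes "\<And>\<sigma>. \<phi>' \<sigma> \<Longrightarrow> \<phi> \<sigma>" and "g \<le> g'"
  shows "guard_to \<phi> g \<le> guard_to \<phi>' g'"
  using assms by (auto simp: guard_to_def le_fun_def)

lemma iver_mult_mono:
  assumes "\<And>\<sigma>. \<phi>' \<sigma> \<Longrightarrow> \<phi> \<sigma>" and "g' \<le> g"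
  shows "(\<lambda>\<sigma>. iver \<phi>' \<sigma> * g' \<sigma>) \<le> (\<lambda>\<sigma>. iver \<phi> \<sigma> * g \<sigma>)"
  using assms by (auto simp: iver_def le_fun_def)

lemma prob_combination_mono:
  fixes f1 f2 g1 g2 :: expectation
  assumes "f1 \<le> g1" and "f2 \<le> g2"
  shows "(\<lambda>\<sigma>. ennreal (Rep_prob (p \<sigma>)) * f1 \<sigma> + ennreal (1 - Rep_prob (p \<sigma>)) * f2 \<sigma>)
    \<le> (\<lambda>\<sigma>. ennreal (Rep_prob (p \<sigma>)) * g1 \<sigma> + ennreal (1 - Rep_prob (p \<sigma>)) * g2 \<sigma>)"
  using assms by (auto simp: le_fun_def intro!: add_mono mult_left_mono)

lemma lfp_loop_mono:
  fixes f f' :: expectation and T T' :: "expectation \<Rightarrow> expectation"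
  assumes "f \<le> f'" and "\<And>g. T g \<le> T' g"
  shows "lfp (\<lambda>g \<sigma>. iver (\<lambda>s. \<not> \<phi> s) \<sigma> * f \<sigma> + iver \<phi> \<sigma> * T g \<sigma>)
    \<le> lfp (\<lambda>g \<sigma>. iver (\<lambda>s. \<not> \<phi> s) \<sigma> * f' \<sigma> + iver \<phi> \<sigma> * T' g \<sigma>)"
  using assms by (intro lfp_mono) (auto simp: le_fun_def intro!: add_mono mult_left_mono)

lemma dwp_mono: "f \<le> g \<Longrightarrow> dwp C f \<le> dwp C g"
proof (induction C arbitrary: f g)
  case (Assign x E)
  then show ?case by (auto simp: subst_def le_fun_def)
next
  case (GChoice \<phi>1 C1 \<phi>2 C2)
  then show ?case unfolding dwp.simps by (intro inf_mono guard_to_mono) simp_all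
qed (auto intro!: prob_combination_mono lfp_loop_mono)

lemma awp_mono: "f \<le> g \<Longrightarrow> awp C f \<le> awp C g"
proof (induction C arbitrary: f g)
  case (Assign x E)
  then show ?case by (auto simp: subst_def le_fun_def)
next
  case (GChoice \<phi>1 C1 \<phi>2 C2)
  then show ?case unfolding awp.simps by (intro sup_mono iver_mult_mono) simp_all
qed (auto intro!: prob_combination_mono lfp_loop_mono)

lemma impl_imp_dwp_le: "impl C' C \<Longrightarrow> dwp C f \<le> dwp C' f"
proof (induction arbitrary: f rule: impl.induct)
  case (impl_trans C1 C2 C3)
  then show ?case by (meson order_trans)
next
  case (impl_seq C1' C1 C2' C2)
  have "dwp C1 (dwp C2 f) \<le> dwp C1 (dwp C2' f)" by (intro dwp_mono impl_seq.IH)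
  also have "\<dots> \<le> dwp C1' (dwp C2' f)" by (rule impl_seq.IH)
  finally show ?case by simp
next
  case (impl_if C1' C1 C2' C2 \<phi>1' \<phi>1 \<phi>2' \<phi>2)
  then show ?case unfolding dwp.simps by (intro inf_mono guard_to_mono) simp_all
qed (auto intro!: prob_combination_mono lfp_loop_mono)

lemma impl_imp_awp_le: "impl C' C \<Longrightarrow> awp C' f \<le> awp C f"
proof (induction arbitrary: f rule: impl.induct)
  case (impl_trans C1 C2 C3)
  then show ?case by (meson order_trans)
next
  case (impl_seq C1' C1 C2' C2)
  have "awp C1' (awp C2' f) \<le> awp C1 (awp C2' f)" by (rule impl_seq.IH)
  also have "\<dots> \<le> awp C1 (awp C2 f)" by (intro awp_mono impl_seq.IH)
  finally show ?case by simp
next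
  case (impl_if C1' C1 C2' C2 \<phi>1' \<phi>1 \<phi>2' \<phi>2)
  then show ?case unfolding awp.simps by (intro sup_mono iver_mult_mono) simp_all
qed (auto intro!: prob_combination_mono lfp_loop_mono)

theorem lemma4p3:
  fixes C C' :: pgcl and f :: expectation
  assumes "wf C" and "wf C'" and "impl C' C"
  shows "dwp C f \<le> dwp C' f \<and> awp C' f \<le> awp C f"
  using assms(3) by (simp add: impl_imp_dwp_le impl_imp_awp_le)

end
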